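(* For all integers $n, k \geq 1$ with $n \geq k$, $$\sum_{i=k}^{n} \frac{S(n,i)\, s(i,k)}{i} = \frac{1}{n}\binom{n}{k} B_{n-k} + \delta_{n-1,k},$$ where $\delta$ denotes the Kronecker delta.
   Context: For $n \geq 0$, $X^{\underline{n}} := X(X-1)\cdots(X-n+1)$ ($X^{\underline{0}}=1$). The (signed) Stirling numbers of the first kind $s(n,k)$ are defined by $X^{\underline{n}} = \sum_{k=0}^{n} s(n,k) X^k$, and the Stirling numbers of the second kind $S(n,k)$ by $X^n = \sum_{k=0}^{n} S(n,k) X^{\underline{k}}$ (for all $n\ge 0$), with $s(n,k)=S(n,k)=0$ when $n<k$. The Bernoulli numbers $B_n$ are defined by $\frac{t}{e^t-1} = \sum_{n\ge 0} B_n \frac{t^n}{n!}$. *)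

theory Defs
  imports "HOL-Combinatorics.Stirling" "HOL-Computational_Algebra.Formal_Power_Series"
begin

text \<open>Signed Stirling numbers of the first kind: s(n,k) = (-1)^(n-k) * c(n,k),
  where c = stirling is the unsigned (cycle) Stirling number of the library.
  Stirling numbers of the second kind are the library's Stirling.\<close>
definition stirling1s :: "nat \<Rightarrow> nat \<Rightarrow> int" where
  "stirling1s n k = (-1) ^ (n - k) * int (stirling n k)"

definition bernoulli_gf :: "real fps" where
  "bernoulli_gf = fps_X / (fps_exp 1 - 1)"

definition bernoulli :: "nat \<Rightarrow> real" where
  "bernoulli n = fact n * fps_nth bernoulli_gf n"

end

theory Submission
  imports Defs "HOL-Computational_Algebra.Polynomial"
begin

text \<open>
  Put P_n(x) = sum_i S(n,i) (x)_i / i, where (x)_i is the falling factorial. Because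
  (x+1)_i - (x)_i = i (x)_(i-1) and (x+1) (x)_(i-1) = (x+1)_i, expanding (x+1)^n in falling
  factorials gives P_n(x+1) - P_n(x) = (x+1)^(n-1), hence P_n(N) = 1^(n-1) + ... + N^(n-1).
  Faulhaber's formula, read off from t sum_(j<N) e^(jt) = t/(e^t - 1) (e^(Nt) - 1), writes this
  sum as a polynomial in N with Bernoulli coefficients; the summand N^(n-1) missing from
  sum_(j<N) j^(n-1) is the Kronecker delta. Since (x)_i = sum_k s(i,k) x^k, the coefficient of
  x^k in P_n is the left-hand side, and comparing coefficients proves the identity.
\<close>

definition falling_factorial :: "nat \<Rightarrow> 'a::comm_ring_1 \<Rightarrow> 'a" where
  "falling_factorial n x = (-1) ^ n * pochhammer (-x) n"

lemma falling_factorial_0 [simp]: "falling_factorial 0 x = 1"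
  by (simp add: falling_factorial_def)

lemma falling_factorial_Suc: "falling_factorial (Suc n) x = falling_factorial n x * (x - of_nat n)"
  by (simp add: falling_factorial_def pochhammer_Suc algebra_simps)

lemma falling_factorial_Suc_plus_1:
  "falling_factorial (Suc n) (x + 1) = (x + 1) * falling_factorial n x"
  by (simp add: falling_factorial_def pochhammer_rec algebra_simps)

lemma falling_factorial_at_0: "n > 0 \<Longrightarrow> falling_factorial n 0 = 0"
  by (cases n) (simp_all add: falling_factorial_def pochhammer_rec)

lemma falling_factorial_forward_difference:
  "(x + 1) * (falling_factorial n (x + 1) - falling_factorial n x)
     = of_nat n * falling_factorial n (x + 1)"
proof (cases n)
  case (Suc m)
  have "falling_factorial (Suc m) (x + 1) - falling_factorial (Suc m) x
      = of_nat (Suc m) * falling_factorial m x"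
    by (subst falling_factorial_Suc_plus_1, subst falling_factorial_Suc) (simp add: algebra_simps)
  then show ?thesis
    by (simp only: Suc falling_factorial_Suc_plus_1 mult.left_commute)
qed simp

lemma power_eq_sum_Stirling_falling_factorial:
  "x ^ n = (\<Sum>k\<le>n. of_nat (Stirling n k) * falling_factorial k x)"
proof (induction n)
  case 0
  then show ?case by simp
next
  case (Suc n)
  have "x ^ Suc n = (\<Sum>k\<le>n. of_nat (Stirling n k) * (x * falling_factorial k x))"
    by (simp add: Suc sum_distrib_left algebra_simps)
  also have "\<dots> = (\<Sum>k\<le>n. of_nat (Stirling n k) * falling_factorial (Suc k) x)
       + (\<Sum>k\<le>n. of_nat k * of_nat (Stirling n k) * falling_factorial k x)"
    by (simp add: sum.distrib[symmetric] falling_factorial_Suc algebra_simps)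
  also have "(\<Sum>k\<le>n. of_nat k * of_nat (Stirling n k) * falling_factorial k x)
      = (\<Sum>k\<le>n. of_nat (Suc k) * of_nat (Stirling n (Suc k)) * falling_factorial (Suc k) x)"
    using sum.atMost_Suc_shift[of "\<lambda>k. of_nat k * of_nat (Stirling n k) * falling_factorial k x" n]
    by simp
  also have "(\<Sum>k\<le>n. of_nat (Stirling n k) * falling_factorial (Suc k) x) + \<dots>
      = (\<Sum>k\<le>Suc n. of_nat (Stirling (Suc n) k) * falling_factorial k x)"
    by (subst sum.atMost_Suc_shift) (simp add: sum.distrib algebra_simps)
  finally show ?case .
qed

lemma falling_factorial_eq_sum_stirling1s:
  "falling_factorial n x = (\<Sum>k\<le>n. of_int (stirling1s n k) * x ^ k)"
proof -
  have "falling_factorial n x = (\<Sum>k\<le>n. (-1) ^ n * of_nat (stirling n k) * (-x) ^ k)"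
    by (simp add: falling_factorial_def stirling_pochhammer[symmetric] sum_distrib_left mult.assoc)
  also have "\<dots> = (\<Sum>k\<le>n. of_int (stirling1s n k) * x ^ k)"
  proof (intro sum.cong refl)
    fix k assume "k \<in> {..n}"
    then have "(-1 :: 'a) ^ n = (-1) ^ (n - k) * (-1) ^ k"
      by (simp flip: power_add)
    then show "(-1) ^ n * of_nat (stirling n k) * (-x) ^ k = of_int (stirling1s n k) * x ^ k"
      by (simp add: stirling1s_def power_minus[of x] algebra_simps)
  qed
  finally show ?thesis .
qed

definition falling_factorial_poly :: "nat \<Rightarrow> 'a::comm_ring_1 poly" where
  "falling_factorial_poly n = (\<Sum>k\<le>n. monom (of_int (stirling1s n k)) k)"

lemma poly_falling_factorial_poly: "poly (falling_factorial_poly n) x = falling_factorial n x"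
  by (simp add: falling_factorial_poly_def falling_factorial_eq_sum_stirling1s poly_sum poly_monom)

lemma coeff_falling_factorial_poly: "coeff (falling_factorial_poly n) k = of_int (stirling1s n k)"
  by (cases "k \<le> n") (auto simp: falling_factorial_poly_def coeff_sum coeff_monom stirling1s_def)

lemma poly_eqI_of_nat:
  fixes p q :: "'a::{idom, ring_char_0} poly"
  assumes "\<And>N. poly p (of_nat N) = poly q (of_nat N)"
  shows "p = q"
proof (rule ccontr)
  assume "p \<noteq> q"
  then have "finite {x. poly (p - q) x = 0}"
    by (intro poly_roots_finite) simp
  moreover have "range of_nat \<subseteq> {x. poly (p - q) x = 0}"
    using assms by auto
  ultimately have "finite (range (of_nat :: nat \<Rightarrow> 'a))"
    by (rule finite_subset[rotated])
  then show False
    using range_inj_infinite[of "of_nat :: nat \<Rightarrow> 'a"] inj_of_nat by blast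
qed

lemma bernoulli_gf_mult_exp_minus_1: "bernoulli_gf * (fps_exp 1 - 1) = fps_X"
proof -
  have "subdegree (fps_exp (1::real) - 1) = 1"
    by (rule subdegreeI) auto
  then have "(fps_exp (1::real) - 1) dvd fps_X"
    by (subst fps_dvd_iff) auto
  then show ?thesis
    by (simp add: bernoulli_gf_def)
qed

lemma fps_exp_minus_1_mult_sum_exp:
  "(fps_exp 1 - 1) * (\<Sum>j<N. fps_exp (of_nat j)) = fps_exp (of_nat N) - (1 :: 'a::field_char_0 fps)"
proof (induction N)
  case (Suc N)
  have "fps_exp (of_nat (Suc N)) = fps_exp 1 * fps_exp (of_nat N :: 'a)"
    by (simp add: fps_exp_add_mult[symmetric] add.commute)
  then show ?case
    using Suc by (simp add: algebra_simps)
qed simp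

lemma sum_powers_bernoulli:
  "(\<Sum>j<N. real j ^ m)
     = (\<Sum>d=1..Suc m. real (Suc m choose d) * bernoulli (Suc m - d) * real N ^ d) / real (Suc m)"
proof -
  have "fps_X * (\<Sum>j<N. fps_exp (real j))
      = bernoulli_gf * ((fps_exp 1 - 1) * (\<Sum>j<N. fps_exp (real j)))"
    by (simp only: bernoulli_gf_mult_exp_minus_1 mult.assoc[symmetric])
  also have "\<dots> = (fps_exp (real N) - 1) * bernoulli_gf"
    by (simp only: fps_exp_minus_1_mult_sum_exp mult.commute)
  finally have "fps_nth (fps_X * (\<Sum>j<N. fps_exp (real j))) (Suc m)
      = fps_nth ((fps_exp (real N) - 1) * bernoulli_gf) (Suc m)"
    by simp
  moreover have "fps_nth (fps_X * (\<Sum>j<N. fps_exp (real j))) (Suc m)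
      = (\<Sum>j<N. real j ^ m / fact m)"
    by (simp add: fps_sum_nth)
  moreover have "fps_nth ((fps_exp (real N) - 1) * bernoulli_gf) (Suc m)
      = (\<Sum>d=0..Suc m. (real N ^ d / fact d - (if d = 0 then 1 else 0))
                        * fps_nth bernoulli_gf (Suc m - d))"
    by (simp only: fps_mult_nth fps_sub_nth fps_exp_nth fps_one_nth of_nat_fact)
  ultimately have "(\<Sum>j<N. real j ^ m / fact m)
      = (\<Sum>d=0..Suc m. (real N ^ d / fact d - (if d = 0 then 1 else 0))
                        * fps_nth bernoulli_gf (Suc m - d))"
    by simp
  also have "\<dots> = (\<Sum>d=1..Suc m. real N ^ d / fact d * fps_nth bernoulli_gf (Suc m - d))"
    by (simp add: sum.atLeast_Suc_atMost)
  also have "\<dots> = (\<Sum>d=1..Suc m. real (Suc m choose d) * bernoulli (Suc m - d) * real N ^ d)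
                   / real (Suc m) / fact m"
    unfolding sum_divide_distrib
  proof (intro sum.cong refl)
    fix d assume "d \<in> {1..Suc m}"
    then have "real (Suc m choose d) = fact (Suc m) / (fact d * fact (Suc m - d))"
      by (simp add: binomial_fact)
    moreover have "fact (Suc m) = real (Suc m) * fact m"
      by simp
    ultimately show "real N ^ d / fact d * fps_nth bernoulli_gf (Suc m - d)
        = real (Suc m choose d) * bernoulli (Suc m - d) * real N ^ d / real (Suc m) / fact m"
      unfolding bernoulli_def by (simp del: of_nat_Suc fact_Suc)
  qed
  finally show ?thesis
    by (simp add: sum_divide_distrib[symmetric] divide_eq_eq del: of_nat_Suc)
qed

text \<open>The summand i = 0 vanishes because division by zero yields zero.\<close>

definition stirling_antidifference :: "nat \<Rightarrow> 'a::field_char_0 poly" where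
  "stirling_antidifference n =
     (\<Sum>i\<le>n. smult (of_nat (Stirling n i) / of_nat i) (falling_factorial_poly i))"

lemma coeff_stirling_antidifference:
  "coeff (stirling_antidifference n) k
     = (\<Sum>i=k..n. of_nat (Stirling n i) * of_int (stirling1s i k) / of_nat i)"
proof -
  have "coeff (stirling_antidifference n) k
      = (\<Sum>i\<le>n. of_nat (Stirling n i) * of_int (stirling1s i k) / of_nat i)"
    by (simp add: stirling_antidifference_def coeff_sum coeff_falling_factorial_poly)
  also have "\<dots> = (\<Sum>i=k..n. of_nat (Stirling n i) * of_int (stirling1s i k) / of_nat i)"
    by (intro sum.mono_neutral_right) (auto simp: stirling1s_def)
  finally show ?thesis .
qed

lemma poly_stirling_antidifference_0: "poly (stirling_antidifference n) 0 = 0"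
  by (auto simp: stirling_antidifference_def poly_sum poly_falling_factorial_poly
      falling_factorial_at_0 intro!: sum.neutral)

lemma poly_stirling_antidifference_step:
  assumes "n > 0" and "x + 1 \<noteq> 0"
  shows "poly (stirling_antidifference n) (x + 1) - poly (stirling_antidifference n) x
           = (x + 1) ^ (n - 1)"
proof -
  let ?P = "stirling_antidifference n :: 'a poly"
  have poly_P: "poly ?P y = (\<Sum>i\<le>n. of_nat (Stirling n i) / of_nat i * falling_factorial i y)"
    for y
    by (simp add: stirling_antidifference_def poly_sum poly_falling_factorial_poly)
  have "(x + 1) * (poly ?P (x + 1) - poly ?P x)
      = (\<Sum>i\<le>n. of_nat (Stirling n i) / of_nat i
            * ((x + 1) * (falling_factorial i (x + 1) - falling_factorial i x)))"
    unfolding poly_P sum_subtractf[symmetric] sum_distrib_left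
    by (intro sum.cong refl) (simp only: right_diff_distrib mult.left_commute)
  also have "\<dots> = (\<Sum>i\<le>n. of_nat (Stirling n i) * falling_factorial i (x + 1))"
    using \<open>n > 0\<close>
    by (intro sum.cong refl) (auto simp: falling_factorial_forward_difference gr0_conv_Suc)
  also have "\<dots> = (x + 1) * (x + 1) ^ (n - 1)"
    using \<open>n > 0\<close> by (simp flip: power_eq_sum_Stirling_falling_factorial power_Suc)
  finally show ?thesis
    using \<open>x + 1 \<noteq> 0\<close> by simp
qed

lemma poly_stirling_antidifference_of_nat:
  assumes "n > 0"
  shows "poly (stirling_antidifference n :: 'a::field_char_0 poly) (of_nat N)
           = (\<Sum>j<N. of_nat (Suc j) ^ (n - 1))"
proof -
  have "poly (stirling_antidifference n :: 'a poly) (of_nat N)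
      = (\<Sum>j<N. poly (stirling_antidifference n) (of_nat (Suc j))
                 - poly (stirling_antidifference n) (of_nat j))"
    using sum_lessThan_telescope[of "\<lambda>j. poly (stirling_antidifference n) (of_nat j :: 'a)" N]
    by (simp add: poly_stirling_antidifference_0)
  also have "\<dots> = (\<Sum>j<N. of_nat (Suc j) ^ (n - 1))"
  proof (intro sum.cong refl)
    fix j
    show "poly (stirling_antidifference n) (of_nat (Suc j))
          - poly (stirling_antidifference n) (of_nat j) = (of_nat (Suc j) :: 'a) ^ (n - 1)"
      using poly_stirling_antidifference_step[OF assms, of "of_nat j"] of_nat_neq_0[of j]
      by (simp only: of_nat_Suc add.commute)
  qed
  finally show ?thesis .
qed

definition faulhaber_poly :: "nat \<Rightarrow> real poly" where
  "faulhaber_poly m =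
     (\<Sum>d=1..Suc m. monom (real (Suc m choose d) * bernoulli (Suc m - d) / real (Suc m)) d)"

lemma poly_faulhaber_poly: "poly (faulhaber_poly m) (real N) = (\<Sum>j<N. real j ^ m)"
  unfolding faulhaber_poly_def sum_powers_bernoulli sum_divide_distrib poly_sum poly_monom
  by (intro sum.cong refl) simp

lemma coeff_faulhaber_poly:
  assumes "k > 0"
  shows "coeff (faulhaber_poly m) k = real (Suc m choose k) * bernoulli (Suc m - k) / real (Suc m)"
  using assms by (cases "k \<le> Suc m") (simp_all add: faulhaber_poly_def coeff_sum)

lemma stirling_antidifference_eq_faulhaber_poly:
  "stirling_antidifference (Suc m) = faulhaber_poly m + monom 1 m - [:0 ^ m:]"
proof (rule poly_eqI_of_nat)
  fix N
  have "(\<Sum>j<N. real (Suc j) ^ m) = (\<Sum>j<N. real j ^ m) + real N ^ m - 0 ^ m"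
    using sum.lessThan_Suc_shift[of "\<lambda>j. real j ^ m" N] by simp
  then show "poly (stirling_antidifference (Suc m)) (of_nat N)
      = poly (faulhaber_poly m + monom 1 m - [:0 ^ m:]) (of_nat N)"
    by (simp add: poly_stirling_antidifference_of_nat poly_faulhaber_poly poly_monom)
qed

theorem corollary4:
  fixes n k :: nat
  assumes "k \<ge> 1" and "n \<ge> k"
  shows "(\<Sum>i=k..n. real (Stirling n i) * real_of_int (stirling1s i k) / real i)
         = (1 / real n) * real (n choose k) * bernoulli (n - k)
           + (if n - 1 = k then 1 else 0)"
proof -
  obtain m where n: "n = Suc m"
    using assms by (cases n) auto
  have "(\<Sum>i=k..n. real (Stirling n i) * real_of_int (stirling1s i k) / real i)
      = coeff (stirling_antidifference n) k"
    by (simp add: coeff_stirling_antidifference)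
  also have "\<dots> = coeff (faulhaber_poly m + monom 1 m - [:0 ^ m:]) k"
    by (simp add: n stirling_antidifference_eq_faulhaber_poly)
  also have "\<dots> = real (n choose k) * bernoulli (n - k) / real n + (if m = k then 1 else 0)"
    using assms by (simp add: n coeff_faulhaber_poly coeff_pCons split: nat.split)
  finally show ?thesis
    by (simp add: n)
qed

end
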